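(* Let $b>3$ be a strongly symmetric base. Then $b+1$ is prime.
   Context: Let $b>2$ be an integer base and write $(d_k,d_{k-1},\ldots,d_0)_b=\sum_{j=0}^k d_j b^j$ with $0\le d_j<b$. A natural number $p=(d_k,\ldots,d_0)_b$ with $d_k\neq 0$ and $d_0\neq 0$ that is not a base-$b$ palindrome is an $(n,b)$-palintiple if $(d_k,\ldots,d_0)_b=n\,(d_0,d_1,\ldots,d_k)_b$ for an integer $n$ with $1<n<b$; a base-$b$ palintiple is an $(n,b)$-palintiple for some such $n$. Its carries $c_0,\ldots,c_{k+1}$ are the carries arising in the base-$b$ multiplication of $(d_0,\ldots,d_k)_b$ by $n$: $c_0=0$ and $n d_{k-j}+c_j=d_j+b\,c_{j+1}$ for $0\le j\le k$ (so $c_{k+1}=0$). The palintiple is symmetric if $c_j=c_{k-j}$ for all $0\le j\le k$. A base $b$ is strongly symmetric if every base-$b$ palintiple (for every $n$ with $1<n<b$) is symmetric. *)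

theory Defs
  imports "HOL-Computational_Algebra.Primes"
begin

text \<open>A base-b digit string of length k+1 is a function d :: nat => nat,
  where d j is the coefficient of b^j for j <= k.\<close>

definition digval :: "nat \<Rightarrow> nat \<Rightarrow> (nat \<Rightarrow> nat) \<Rightarrow> nat" where
  "digval b k d = (\<Sum>j\<le>k. d j * b ^ j)"

definition is_palintiple :: "nat \<Rightarrow> nat \<Rightarrow> nat \<Rightarrow> (nat \<Rightarrow> nat) \<Rightarrow> bool" where
  "is_palintiple n b k d \<longleftrightarrow>
     1 < n \<and> n < b \<and>
     (\<forall>j\<le>k. d j < b) \<and> d k \<noteq> 0 \<and> d 0 \<noteq> 0 \<and>
     \<not> (\<forall>j\<le>k. d j = d (k - j)) \<and>
     digval b k d = n * digval b k (\<lambda>j. d (k - j))"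

text \<open>Carries of the base-b multiplication of (d_0,...,d_k)_b by n:
  c_0 = 0 and n d_{k-j} + c_j = d_j + b c_{j+1}; for a palintiple these
  are uniquely determined, c_{j+1} = (n d_{k-j} + c_j) div b.\<close>

fun carry :: "nat \<Rightarrow> nat \<Rightarrow> nat \<Rightarrow> (nat \<Rightarrow> nat) \<Rightarrow> nat \<Rightarrow> nat" where
  "carry n b k d 0 = 0"
| "carry n b k d (Suc j) = (n * d (k - j) + carry n b k d j) div b"

definition symmetric_palintiple :: "nat \<Rightarrow> nat \<Rightarrow> nat \<Rightarrow> (nat \<Rightarrow> nat) \<Rightarrow> bool" where
  "symmetric_palintiple n b k d \<longleftrightarrow>
     (\<forall>j\<le>k. carry n b k d j = carry n b k d (k - j))"

definition strongly_symmetric :: "nat \<Rightarrow> bool" where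
  "strongly_symmetric b \<longleftrightarrow>
     (\<forall>n k d. is_palintiple n b k d \<longrightarrow> symmetric_palintiple n b k d)"

end

theory Submission
  imports Defs
begin

text \<open>If b + 1 = (n + 1)(s + 1) with n \<ge> 2 and s \<ge> 1, then b = ns + n + s and the two-digit
  number with digits d_1 = ns + n - 1, d_0 = s is an (n,b)-palintiple:
  (ns + n - 1) b + s = n (s b + ns + n - 1).  Its only inner carry is
  c_1 = floor(n d_1 / b) \<ge> 1 while c_0 = 0, so it is not symmetric.  A composite
  b + 1 \<ge> 5 always has such a factorisation.\<close>

lemma digval_two_digits: "digval b 1 d = d 0 + d 1 * b"
  by (simp add: digval_def atMost_Suc)

lemma symmetric_two_digit_palintiple_iff:
  assumes "0 < b"
  shows "symmetric_palintiple n b 1 d \<longleftrightarrow> n * d 1 < b"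
proof -
  have "symmetric_palintiple n b 1 d \<longleftrightarrow> carry n b 1 d 1 = 0"
    unfolding symmetric_palintiple_def by (auto simp: le_Suc_eq)
  also have "\<dots> \<longleftrightarrow> n * d 1 < b"
    using assms by (simp add: div_eq_0_iff)
  finally show ?thesis .
qed

lemma two_digit_palintiple:
  fixes n s :: nat
  assumes "2 \<le> n" and "1 \<le> s"
  defines "b \<equiv> n * s + n + s"
    and "d \<equiv> \<lambda>j. if j = 0 then s else n * s + n - 1"
  shows "is_palintiple n b 1 d"
proof -
  have d0: "d 0 = s" and d1: "d 1 = n * s + n - 1"
    by (simp_all add: d_def)
  have "s < d 1" and "d 1 < b"
    using assms(1) unfolding d1 b_def by (cases n; simp)+
  hence "d 0 \<noteq> d (1 - 0)"
    by (simp add: d0)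
  hence "\<not> (\<forall>j\<le>1. d j = d (1 - j))"
    using zero_le_one by blast
  moreover have "digval b 1 d = n * digval b 1 (\<lambda>j. d (1 - j))"
  proof -
    obtain k where k: "n = Suc k"
      using assms(1) by (cases n) auto
    have "s + (n * s + n - 1) * b = n * ((n * s + n - 1) + s * b)"
      unfolding b_def k by (simp add: algebra_simps)
    thus ?thesis
      unfolding digval_two_digits by (simp add: d_def)
  qed
  moreover have "\<forall>j\<le>1. d j < b"
    using \<open>s < d 1\<close> \<open>d 1 < b\<close> d0 by (auto simp: le_Suc_eq)
  ultimately show ?thesis
    using assms \<open>s < d 1\<close> d0 unfolding is_palintiple_def by (simp add: b_def)
qed

lemma not_strongly_symmetric_if_factor:
  fixes n s :: nat
  assumes "2 \<le> n" and "1 \<le> s"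
  shows "\<not> strongly_symmetric (n * s + n + s)"
proof
  define b where "b = n * s + n + s"
  define d :: "nat \<Rightarrow> nat" where "d = (\<lambda>j. if j = 0 then s else n * s + n - 1)"
  assume "strongly_symmetric (n * s + n + s)"
  moreover have "is_palintiple n b 1 d"
    using two_digit_palintiple[OF assms] by (simp add: b_def d_def)
  ultimately have "symmetric_palintiple n b 1 d"
    by (simp add: strongly_symmetric_def b_def)
  moreover have "0 < b"
    using assms by (simp add: b_def)
  ultimately have "n * d 1 < b"
    using symmetric_two_digit_palintiple_iff by blast
  moreover have "b \<le> n * d 1"
  proof -
    have "s \<le> n * s"
      using assms by simp
    hence "b \<le> 2 * (n * s + n - 1)"
      using assms unfolding b_def by linarith
    also have "\<dots> \<le> n * d 1"
      using assms by (simp add: d_def mult_right_mono)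
    finally show ?thesis .
  qed
  ultimately show False
    by simp
qed

lemma composite_factor_ge_3:
  fixes a :: nat
  assumes "5 \<le> a" and "\<not> prime a"
  obtains x y where "a = x * y" and "3 \<le> x" and "2 \<le> y"
proof -
  obtain x y where a: "a = x * y" and "x \<noteq> 1" and "y \<noteq> 1"
    using assms prime_nat_iff by auto
  moreover have "x * y \<noteq> 0"
    using a assms(1) by linarith
  ultimately have x: "2 \<le> x" and y: "2 \<le> y"
    by auto
  have "\<not> (x = 2 \<and> y = 2)"
    using a assms(1) by auto
  with x y have "3 \<le> x \<or> 3 \<le> y"
    by auto
  with a x y that show thesis
    by (metis mult.commute)
qed

theorem theorem2:
  fixes b :: nat
  assumes "b > 3" and "strongly_symmetric b"
  shows "prime (b + 1)"
proof (rule ccontr)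
  assume "\<not> prime (b + 1)"
  then obtain x y where xy: "b + 1 = x * y" and "3 \<le> x" and "2 \<le> y"
    using assms(1) composite_factor_ge_3[of "b + 1"] by auto
  obtain n where n: "x = n + 1" and "2 \<le> n"
    using \<open>3 \<le> x\<close> by (cases x) auto
  obtain s where s: "y = s + 1" and "1 \<le> s"
    using \<open>2 \<le> y\<close> by (cases y) auto
  from xy have "b = n * s + n + s"
    by (simp add: n s algebra_simps)
  with assms(2) not_strongly_symmetric_if_factor[OF \<open>2 \<le> n\<close> \<open>1 \<le> s\<close>] show False
    by simp
qed

end
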